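(* Let $\Omega$ be a finite set, let $\mathcal K$ be a finite nonempty set of gambles on $\Omega$, and let $\underline{P}_{\mathcal K}$ be a coherent lower prevision on $\mathcal K$. Let $\mathcal M=\{P: P(f)\ge\underline{P}_{\mathcal K}(f)\ \forall f\in\mathcal K\}$ be its credal set and $\underline{E}(h)=\min_{P\in\mathcal M}P(h)$ its natural extension. For $f\in\mathcal K$ let $\mathcal M_f=\{P\in\mathcal M: P(f)=\underline{E}(f)\}$ and let $\mathcal E_f$ be the set of extreme points of $\mathcal M_f$. Let $\underline{P}$ be any coherent lower prevision on the set of all gambles with $\underline{P}(f)=\underline{P}_{\mathcal K}(f)$ for all $f\in\mathcal K$ (an extension of $\underline{P}_{\mathcal K}$), and let $h$ be any gamble. Then: (i) $\underline{P}(h)\le\max_{P\in\mathcal M_f}P(h)$ for every $f\in\mathcal K$; (ii) $\underline{P}(h)\le\min_{f\in\mathcal K}\max_{P\in\mathcal M_f}P(h)$, and this inequality is tight: for every gamble $h$ there exists an extension $\underline{P}'$ of $\underline{P}_{\mathcal K}$ (a coherent lower prevision on all gambles agreeing with $\underline{P}_{\mathcal K}$ on $\mathcal K$) with $\underline{P}'(h)=\min_{f\in\mathcal K}\max_{P\in\mathcal M_f}P(h)$; (iii) $\underline{P}(h)\le\min_{f\in\mathcal K}\max_{E\in\mathcal E_f}E(h)$, and this inequality is also tight in the same sense.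
   Context: Gambles are real-valued functions on the finite set $\Omega$. A linear prevision is the expectation functional $P(f)=\sum_{x}p(x)f(x)$ of a probability mass vector $p$. A lower prevision $\underline{P}$ on a set of gambles $\mathcal H$ is coherent if there is a nonempty closed convex set $\mathcal C$ of linear previsions with $\underline{P}(f)=\min_{P\in\mathcal C}P(f)$ for all $f\in\mathcal H$. Since $\mathcal K$ is finite, $\mathcal M$ is a convex polytope and each $\mathcal M_f$ is a face of it with finitely many extreme points. *)

theory Defs
  imports "HOL-Analysis.Analysis"
begin

text \<open>Probability mass vectors are elements of real^'a (Euclidean space, so that
  closedness, convexity and extreme points are the library notions).\<close>

definition pmfs :: "(real ^ 'a::finite) set" where
  "pmfs = {p. (\<forall>x. 0 \<le> p $ x) \<and> (\<Sum>x\<in>UNIV. p $ x) = 1}"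

definition prev :: "real ^ 'a::finite \<Rightarrow> ('a \<Rightarrow> real) \<Rightarrow> real" where
  "prev p f = (\<Sum>x\<in>UNIV. p $ x * f x)"

definition coherent_on :: "('a::finite \<Rightarrow> real) set \<Rightarrow> (('a \<Rightarrow> real) \<Rightarrow> real) \<Rightarrow> bool" where
  "coherent_on H LP \<longleftrightarrow>
     (\<exists>C. C \<noteq> {} \<and> closed C \<and> convex C \<and> C \<subseteq> pmfs \<and>
        (\<forall>f\<in>H. (\<exists>p\<in>C. prev p f = LP f) \<and> (\<forall>p\<in>C. LP f \<le> prev p f)))"

definition credal :: "('a::finite \<Rightarrow> real) set \<Rightarrow> (('a \<Rightarrow> real) \<Rightarrow> real) \<Rightarrow> (real ^ 'a) set" where
  "credal K LP = {p \<in> pmfs. \<forall>f\<in>K. LP f \<le> prev p f}"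

definition natext :: "('a::finite \<Rightarrow> real) set \<Rightarrow> (('a \<Rightarrow> real) \<Rightarrow> real) \<Rightarrow> ('a \<Rightarrow> real) \<Rightarrow> real" where
  "natext K LP h = Inf ((\<lambda>p. prev p h) ` credal K LP)"

definition face_f :: "('a::finite \<Rightarrow> real) set \<Rightarrow> (('a \<Rightarrow> real) \<Rightarrow> real) \<Rightarrow> ('a \<Rightarrow> real) \<Rightarrow> (real ^ 'a) set" where
  "face_f K LP f = {p \<in> credal K LP. prev p f = natext K LP f}"

definition extr_f :: "('a::finite \<Rightarrow> real) set \<Rightarrow> (('a \<Rightarrow> real) \<Rightarrow> real) \<Rightarrow> ('a \<Rightarrow> real) \<Rightarrow> (real ^ 'a) set" where
  "extr_f K LP f = {p. p extreme_point_of (face_f K LP f)}"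

end

theory Submission
  imports Defs
begin

text \<open>Every coherent extension LP is the lower envelope of some credal set C; a minimiser
  in C of a gamble f \<in> K lies in the face M_f, so LP h is bounded by the maximum of P(h)
  over every face. Conversely, picking in each face M_f a maximiser of P(h) and taking the
  lower envelope of the convex hull of these finitely many previsions yields an extension that
  still agrees with the assessment on K and attains the bound. Since P(h) is linear, its maximum
  over the compact convex face is already attained at an extreme point (Krein-Milman), which
  gives the version with extreme points.\<close>

lemma prev_eq_inner: "prev p g = inner (\<chi> x. g x) p"
  by (simp add: prev_def inner_vec_def mult.commute)

lemma continuous_on_prev: "continuous_on S (\<lambda>p. prev p g)"
  unfolding prev_eq_inner by (intro continuous_intros)

lemma prev_ge_on_convex_hull:
  assumes "\<forall>p\<in>E. c \<le> prev p g" "p \<in> convex hull E"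
  shows "c \<le> prev p g"
proof -
  have "convex hull E \<subseteq> {p. c \<le> inner (\<chi> x. g x) p}"
    using assms(1) by (intro hull_minimal convex_halfspace_ge) (auto simp: prev_eq_inner)
  with assms(2) show ?thesis by (auto simp: prev_eq_inner)
qed

lemma prev_le_on_convex_hull:
  assumes "\<forall>p\<in>E. prev p g \<le> c" "p \<in> convex hull E"
  shows "prev p g \<le> c"
proof -
  have "convex hull E \<subseteq> {p. inner (\<chi> x. g x) p \<le> c}"
    using assms(1) by (intro hull_minimal convex_halfspace_le) (auto simp: prev_eq_inner)
  with assms(2) show ?thesis by (auto simp: prev_eq_inner)
qed

lemma compact_prev_image: "compact S \<Longrightarrow> compact ((\<lambda>p. prev p g) ` S)"
  by (intro compact_continuous_image continuous_on_prev)

lemma bdd_above_prev_image: "compact S \<Longrightarrow> bdd_above ((\<lambda>p. prev p g) ` S)"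
  by (intro bounded_imp_bdd_above compact_imp_bounded compact_prev_image)

lemma prev_attains_Inf:
  assumes "compact S" "S \<noteq> {}"
  obtains p where "p \<in> S" "prev p g = Inf ((\<lambda>p. prev p g) ` S)"
    "\<And>q. q \<in> S \<Longrightarrow> Inf ((\<lambda>p. prev p g) ` S) \<le> prev q g"
proof -
  obtain p where p: "p \<in> S" "\<forall>q\<in>S. prev p g \<le> prev q g"
    using compact_attains_inf[OF compact_prev_image[OF assms(1)]] assms(2) by fastforce
  have "Inf ((\<lambda>p. prev p g) ` S) = prev p g"
    using p by (intro cInf_eq_minimum) auto
  with p that show ?thesis by auto
qed

lemma prev_attains_Sup:
  assumes "compact S" "S \<noteq> {}"
  obtains p where "p \<in> S" "prev p g = Sup ((\<lambda>p. prev p g) ` S)"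
proof -
  obtain p where p: "p \<in> S" "\<forall>q\<in>S. prev q g \<le> prev p g"
    using compact_attains_sup[OF compact_prev_image[OF assms(1)]] assms(2) by fastforce
  have "Sup ((\<lambda>p. prev p g) ` S) = prev p g"
    using p by (intro cSup_eq_maximum) auto
  with p that show ?thesis by auto
qed

lemma Sup_prev_extreme_points:
  fixes S :: "(real ^ 'a::finite) set"
  assumes "compact S" "convex S"
  shows "Sup ((\<lambda>p. prev p g) ` {p. p extreme_point_of S}) = Sup ((\<lambda>p. prev p g) ` S)"
proof (cases "S = {}")
  case True
  then show ?thesis by (simp add: extreme_point_of_def)
next
  case False
  let ?E = "{p. p extreme_point_of S}"
  have hull: "S = convex hull ?E"
    by (rule Krein_Milman_Minkowski[OF assms])
  have sub: "?E \<subseteq> S" by (auto simp: extreme_point_of_def)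
  have ne: "?E \<noteq> {}" using hull False by auto
  have bdd: "bdd_above ((\<lambda>p. prev p g) ` ?E)"
    using bdd_above_prev_image[OF assms(1)] sub by (meson bdd_above_mono image_mono)
  have "\<forall>p\<in>?E. prev p g \<le> Sup ((\<lambda>p. prev p g) ` ?E)"
    using bdd by (auto intro: cSup_upper)
  then have "\<forall>p\<in>S. prev p g \<le> Sup ((\<lambda>p. prev p g) ` ?E)"
    using hull prev_le_on_convex_hull by blast
  then have "Sup ((\<lambda>p. prev p g) ` S) \<le> Sup ((\<lambda>p. prev p g) ` ?E)"
    using False by (intro cSup_least) auto
  moreover have "Sup ((\<lambda>p. prev p g) ` ?E) \<le> Sup ((\<lambda>p. prev p g) ` S)"
    using ne sub by (intro cSup_subset_mono bdd_above_prev_image assms(1) image_mono) auto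
  ultimately show ?thesis by simp
qed

lemma pmfs_eq_Inter_halfspaces:
  "(pmfs :: (real ^ 'a::finite) set) =
     (\<Inter>x. {p. 0 \<le> inner (axis x 1) p}) \<inter> {p. inner (\<chi> x. 1) p = 1}"
proof -
  have "inner (\<chi> x. 1) p = (\<Sum>x\<in>UNIV. p $ x)" for p :: "real ^ 'a"
    by (simp add: inner_vec_def)
  then show ?thesis by (auto simp: pmfs_def inner_axis')
qed

lemma closed_pmfs: "closed (pmfs :: (real ^ 'a::finite) set)"
  unfolding pmfs_eq_Inter_halfspaces
  by (intro closed_Int closed_INT ballI closed_halfspace_ge closed_hyperplane)

lemma convex_pmfs: "convex (pmfs :: (real ^ 'a::finite) set)"
  unfolding pmfs_eq_Inter_halfspaces
  by (intro convex_Int convex_INT ballI convex_halfspace_ge convex_hyperplane)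

lemma bounded_pmfs: "bounded (pmfs :: (real ^ 'a::finite) set)"
proof -
  have "norm p \<le> 1" if "p \<in> pmfs" for p :: "real ^ 'a"
  proof -
    have "norm p \<le> (\<Sum>i\<in>UNIV. \<bar>p $ i\<bar>)" by (rule norm_le_l1_cart)
    also have "\<dots> = 1" using that by (simp add: pmfs_def)
    finally show ?thesis .
  qed
  then show ?thesis unfolding bounded_iff by blast
qed

lemma credal_eq_Inter_halfspaces:
  "credal K LP = pmfs \<inter> (\<Inter>f\<in>K. {p. LP f \<le> inner (\<chi> x. f x) p})"
  by (auto simp: credal_def prev_eq_inner)

lemma convex_credal: "convex (credal K LP)"
  unfolding credal_eq_Inter_halfspaces
  by (intro convex_Int convex_pmfs convex_INT ballI convex_halfspace_ge)

lemma compact_credal: "compact (credal K LP)"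
proof -
  have "closed (credal K LP)"
    unfolding credal_eq_Inter_halfspaces
    by (intro closed_Int closed_pmfs closed_INT ballI closed_halfspace_ge)
  moreover have "bounded (credal K LP)"
    using bounded_pmfs by (rule bounded_subset) (auto simp: credal_def)
  ultimately show ?thesis by (simp add: compact_eq_bounded_closed)
qed

lemma face_f_eq_Int_hyperplane:
  "face_f K LP f = credal K LP \<inter> {p. inner (\<chi> x. f x) p = natext K LP f}"
  by (auto simp: face_f_def prev_eq_inner)

lemma compact_face_f: "compact (face_f K LP f)"
  unfolding face_f_eq_Int_hyperplane
  by (intro compact_Int_closed compact_credal closed_hyperplane)

lemma convex_face_f: "convex (face_f K LP f)"
  unfolding face_f_eq_Int_hyperplane by (intro convex_Int convex_credal convex_hyperplane)

lemma Sup_prev_extr_f: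
  "Sup ((\<lambda>p. prev p h) ` extr_f K LP f) = Sup ((\<lambda>p. prev p h) ` face_f K LP f)"
  unfolding extr_f_def by (rule Sup_prev_extreme_points[OF compact_face_f convex_face_f])

lemma
  assumes "coherent_on K LPK" "f \<in> K"
  shows natext_coherent: "natext K LPK f = LPK f"
    and face_f_coherent_nonempty: "face_f K LPK f \<noteq> {}"
proof -
  obtain C where C: "C \<subseteq> pmfs"
    "\<forall>f\<in>K. (\<exists>p\<in>C. prev p f = LPK f) \<and> (\<forall>p\<in>C. LPK f \<le> prev p f)"
    using assms(1) unfolding coherent_on_def by blast
  obtain p where p: "p \<in> C" "prev p f = LPK f" using C(2) assms(2) by blast
  have p_credal: "p \<in> credal K LPK" using p(1) C by (auto simp: credal_def)
  have "Inf ((\<lambda>p. prev p f) ` credal K LPK) = LPK f"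
    using p_credal p(2) assms(2)
    by (intro cInf_eq_minimum image_eqI[where x=p]) (auto simp: credal_def)
  then show natext: "natext K LPK f = LPK f" by (simp add: natext_def)
  show "face_f K LPK f \<noteq> {}" using p_credal p(2) natext by (auto simp: face_f_def)
qed

definition lower_envelope :: "(real ^ 'a::finite) set \<Rightarrow> ('a \<Rightarrow> real) \<Rightarrow> real" where
  "lower_envelope C g = Inf ((\<lambda>p. prev p g) ` C)"

lemma coherent_lower_envelope:
  assumes "compact C" "convex C" "C \<noteq> {}" "C \<subseteq> pmfs"
  shows "coherent_on UNIV (lower_envelope C)"
proof -
  have "(\<exists>p\<in>C. prev p g = lower_envelope C g) \<and> (\<forall>p\<in>C. lower_envelope C g \<le> prev p g)"
    for g :: "'a \<Rightarrow> real"
    using prev_attains_Inf[OF assms(1,3), where g=g] unfolding lower_envelope_def by blast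
  moreover have "closed C" using assms(1) by (rule compact_imp_closed)
  ultimately show ?thesis
    unfolding coherent_on_def using assms(2-4) by (intro exI[of _ C]) simp
qed

lemma extension_le_Sup_face:
  assumes "coherent_on K LPK" "coherent_on UNIV LP" "\<forall>f\<in>K. LP f = LPK f" "f \<in> K"
  shows "LP h \<le> Sup ((\<lambda>p. prev p h) ` face_f K LPK f)"
proof -
  obtain C where C: "C \<subseteq> pmfs" "\<forall>g. (\<exists>p\<in>C. prev p g = LP g) \<and> (\<forall>p\<in>C. LP g \<le> prev p g)"
    using assms(2) unfolding coherent_on_def by blast
  obtain p where p: "p \<in> C" "prev p f = LP f" using C(2) by blast
  have "\<forall>g\<in>K. LPK g \<le> prev p g" using C(2) p(1) assms(3) by metis
  with p(1) C(1) have "p \<in> credal K LPK" by (auto simp: credal_def)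
  then have p_face: "p \<in> face_f K LPK f"
    using p(2) assms(3,4) natext_coherent[OF assms(1,4)] by (auto simp: face_f_def)
  have "LP h \<le> prev p h" using C(2) p(1) by blast
  also have "\<dots> \<le> Sup ((\<lambda>p. prev p h) ` face_f K LPK f)"
    using p_face by (intro cSup_upper bdd_above_prev_image compact_face_f) auto
  finally show ?thesis .
qed

lemma extension_attaining_Min_Sup_face:
  assumes "finite K" "K \<noteq> {}" "coherent_on K LPK"
  obtains LP' where "coherent_on UNIV LP'" "\<forall>f\<in>K. LP' f = LPK f"
    "LP' h = Min ((\<lambda>f. Sup ((\<lambda>p. prev p h) ` face_f K LPK f)) ` K)"
proof -
  define m where "m f = Sup ((\<lambda>p. prev p h) ` face_f K LPK f)" for f
  have "\<exists>p\<in>face_f K LPK f. prev p h = m f" if "f \<in> K" for f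
    using prev_attains_Sup[OF compact_face_f face_f_coherent_nonempty[OF assms(3) that], where g=h]
    unfolding m_def by blast
  then obtain q where q_face: "\<And>f. f \<in> K \<Longrightarrow> q f \<in> face_f K LPK f"
    and q_max: "\<And>f. f \<in> K \<Longrightarrow> prev (q f) h = m f"
    by metis
  define C where "C = convex hull (q ` K)"
  have C_credal: "C \<subseteq> credal K LPK"
    unfolding C_def using q_face by (intro hull_minimal convex_credal) (auto simp: face_f_def)
  have coherent: "coherent_on UNIV (lower_envelope C)"
    using assms(1,2) C_credal unfolding C_def
    by (intro coherent_lower_envelope finite_imp_compact_convex_hull) (auto simp: credal_def)
  have q_in_C: "q f \<in> C" if "f \<in> K" for f
    unfolding C_def using that by (intro hull_inc) auto
  have agrees: "lower_envelope C f = LPK f" if f: "f \<in> K" for f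
  proof -
    have "prev (q f) f = LPK f"
      using q_face[OF f] natext_coherent[OF assms(3) f] by (simp add: face_f_def)
    moreover have "\<forall>p\<in>C. LPK f \<le> prev p f" using C_credal f by (auto simp: credal_def)
    ultimately show ?thesis
      unfolding lower_envelope_def using q_in_C[OF f]
      by (intro cInf_eq_minimum image_eqI[where x="q f"]) auto
  qed
  obtain f0 where f0: "f0 \<in> K" "m f0 = Min (m ` K)"
  proof -
    have "Min (m ` K) \<in> m ` K" using assms(1,2) by (intro Min_in) auto
    with that show ?thesis by auto
  qed
  have "\<forall>p\<in>q ` K. m f0 \<le> prev p h"
    using f0 assms(1) q_max by auto
  then have "\<forall>p\<in>C. m f0 \<le> prev p h"
    unfolding C_def using prev_ge_on_convex_hull by blast
  then have "lower_envelope C h = m f0"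
    unfolding lower_envelope_def using q_in_C[OF f0(1)] q_max[OF f0(1)]
    by (intro cInf_eq_minimum image_eqI[where x="q f0"]) auto
  with coherent agrees f0(2) that show ?thesis unfolding m_def by auto
qed

theorem corollary5:
  fixes K :: "('a::finite \<Rightarrow> real) set"
    and LPK :: "('a \<Rightarrow> real) \<Rightarrow> real"
  assumes "finite K" and "K \<noteq> {}" and "coherent_on K LPK"
  shows
    "(\<forall>LP h. coherent_on UNIV LP \<and> (\<forall>f\<in>K. LP f = LPK f) \<longrightarrow>
        (\<forall>f\<in>K. LP h \<le> Sup ((\<lambda>p. prev p h) ` face_f K LPK f)))
   \<and> (\<forall>LP h. coherent_on UNIV LP \<and> (\<forall>f\<in>K. LP f = LPK f) \<longrightarrow>
        LP h \<le> Min ((\<lambda>f. Sup ((\<lambda>p. prev p h) ` face_f K LPK f)) ` K))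
   \<and> (\<forall>h. \<exists>LP'. coherent_on UNIV LP' \<and> (\<forall>f\<in>K. LP' f = LPK f) \<and>
        LP' h = Min ((\<lambda>f. Sup ((\<lambda>p. prev p h) ` face_f K LPK f)) ` K))
   \<and> (\<forall>LP h. coherent_on UNIV LP \<and> (\<forall>f\<in>K. LP f = LPK f) \<longrightarrow>
        LP h \<le> Min ((\<lambda>f. Sup ((\<lambda>p. prev p h) ` extr_f K LPK f)) ` K))
   \<and> (\<forall>h. \<exists>LP'. coherent_on UNIV LP' \<and> (\<forall>f\<in>K. LP' f = LPK f) \<and>
        LP' h = Min ((\<lambda>f. Sup ((\<lambda>p. prev p h) ` extr_f K LPK f)) ` K))"
proof -
  have bound: "LP h \<le> Min ((\<lambda>f. Sup ((\<lambda>p. prev p h) ` face_f K LPK f)) ` K)"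
    if "coherent_on UNIV LP" "\<forall>f\<in>K. LP f = LPK f" for LP h
    using extension_le_Sup_face[OF assms(3) that] assms(1,2) by (simp add: Min_ge_iff)
  have tight: "\<exists>LP'. coherent_on UNIV LP' \<and> (\<forall>f\<in>K. LP' f = LPK f) \<and>
      LP' h = Min ((\<lambda>f. Sup ((\<lambda>p. prev p h) ` face_f K LPK f)) ` K)" for h
    by (rule extension_attaining_Min_Sup_face[OF assms]) blast
  show ?thesis
    unfolding Sup_prev_extr_f using extension_le_Sup_face[OF assms(3)] bound tight by blast
qed

end
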